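(* Fix a sample size $n\ge 2$, a bag size $m\ge1$ (with $m\le n-1$ in the subbagging case), and $\varepsilon>0$. For any (deterministic, measurable) base learning algorithm $\mathcal{A}$ with outputs in $\Delta_{L-1}$, the classification algorithm $\mathcal{C}=\mathrm{argmax}^\varepsilon\circ\widetilde{\mathcal{A}}_m$, i.e. $\mathcal{C}(\mathcal{D},x)=\mathrm{argmax}^\varepsilon\big(\widetilde{\mathcal{A}}_m(\mathcal{D})(x)\big)$, has selection stability $\delta$ at sample size $n$, where $$\delta=\varepsilon^{-2}\cdot\frac{1-1/L}{n-1}\cdot\frac{p_{n,m}}{1-p_{n,m}},$$ with $p_{n,m}=1-(1-1/n)^m$ for bootstrapping and $p_{n,m}=m/n$ for subbagging.
   Context: Feature space $\mathcal{X}$, labels $[L]=\{1,\dots,L\}$, simplex $\Delta_{L-1}=\{w\in\mathbb{R}^L:w_i\ge0,\sum_iw_i=1\}$, $\|\cdot\|$ Euclidean norm. A learning algorithm $\mathcal{A}$ maps any data set $\mathcal{D}\in\bigcup_{n\ge0}(\mathcal{X}\times[L])^n$ to a function $\mathcal{A}(\mathcal{D}):\mathcal{X}\to\Delta_{L-1}$. For a data set $\mathcal{D}=((X_i,Y_i))_{i\in[N]}$ of size $N$ and a sequence $r=(i_1,\dots,i_m)\in[N]^m$, $\mathcal{D}^r=((X_{i_1},Y_{i_1}),\dots,(X_{i_m},Y_{i_m}))$. The bagged algorithm is $\widetilde{\mathcal{A}}_m(\mathcal{D})(x)=\mathbb{E}_r[\mathcal{A}(\mathcal{D}^r)(x)]$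 (exact expectation), where for bootstrapping $r$ consists of $m$ indices drawn uniformly with replacement from $[N]$, and for subbagging $r$ consists of $m\le N$ indices drawn uniformly without replacement from $[N]$. Inflated argmax: for $j\in[L]$ let $R_j^\varepsilon=\{w\in\mathbb{R}^L: w_j\ge\max_{\ell\neq j}w_\ell+\varepsilon/\sqrt2\}$ and $\mathrm{argmax}^\varepsilon(w)=\{j\in[L]:\mathrm{dist}(w,R_j^\varepsilon)<\varepsilon\}$, with $\mathrm{dist}(w,R)=\inf_{v\in R}\|w-v\|$. For $\mathcal{D}=((X_j,Y_j))_{j\in[n]}$, $\mathcal{D}^{\setminus i}$ is $\mathcal{D}$ with the $i$th point removed. A classification algorithm $\mathcal{C}$ (mapping $(\mathcal{D},x)$ to a subset of $[L]$) has selection stability $\delta$ at sample size $n$ if for all $\mathcal{D}\in(\mathcal{X}\times[L])^n$ and all $x\in\mathcal{X}$, $\frac1n\sum_{i=1}^n\mathbf{1}\{\mathcal{C}(\mathcal{D},x)\cap\mathcal{C}(\mathcal{D}^{\setminus i},x)=\varnothing\}\le\delta$. *)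

theory Defs
  imports "HOL-Analysis.Analysis"
begin

text \<open>Labels are the elements of a finite type 'l, so L = CARD('l);
  probability vectors are elements of real^'l. A data set is a list of
  (feature, label) pairs; positions are 0-based.\<close>

type_synonym ('x,'l) dataset = "('x \<times> 'l) list"
type_synonym ('x,'l) algorithm = "('x,'l) dataset \<Rightarrow> 'x \<Rightarrow> real^'l"

definition prob_simplex :: "(real^'l::finite) set" where
  "prob_simplex = {w. (\<forall>i. 0 \<le> w $ i) \<and> (\<Sum>i\<in>UNIV. w $ i) = 1}"

datatype bag_scheme = Bootstrap | Subbagging

definition index_seqs :: "bag_scheme \<Rightarrow> nat \<Rightarrow> nat \<Rightarrow> nat list set" where
  "index_seqs s N m =
     {r. length r = m \<and> set r \<subseteq> {..<N} \<and> (s = Subbagging \<longrightarrow> distinct r)}"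

text \<open>Bagged algorithm: exact expectation over uniformly drawn r.\<close>
definition bagged :: "bag_scheme \<Rightarrow> nat \<Rightarrow> ('x,'l::finite) algorithm \<Rightarrow> ('x,'l) algorithm" where
  "bagged s m A D x =
     (1 / real (card (index_seqs s (length D) m))) *\<^sub>R
       (\<Sum>r\<in>index_seqs s (length D) m. A (map (\<lambda>i. D ! i) r) x)"

definition R_region :: "real \<Rightarrow> 'l \<Rightarrow> (real^'l::finite) set" where
  "R_region \<epsilon> j = {w. \<forall>l. l \<noteq> j \<longrightarrow> w $ j \<ge> w $ l + \<epsilon> / sqrt 2}"

definition inflated_argmax :: "real \<Rightarrow> real^'l::finite \<Rightarrow> 'l set" where
  "inflated_argmax \<epsilon> w = {j. infdist w (R_region \<epsilon> j) < \<epsilon>}"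

definition remove_nth :: "nat \<Rightarrow> 'a list \<Rightarrow> 'a list" where
  "remove_nth i xs = take i xs @ drop (Suc i) xs"

definition selection_stable ::
  "(('x,'l) dataset \<Rightarrow> 'x \<Rightarrow> 'l set) \<Rightarrow> real \<Rightarrow> nat \<Rightarrow> bool" where
  "selection_stable C \<delta> n \<longleftrightarrow>
     (\<forall>D x. length D = n \<longrightarrow>
        (1 / real n) * (\<Sum>i<n. if C D x \<inter> C (remove_nth i D) x = {} then 1 else 0) \<le> \<delta>)"

definition p_nm :: "bag_scheme \<Rightarrow> nat \<Rightarrow> nat \<Rightarrow> real" where
  "p_nm s n m = (case s of Bootstrap \<Rightarrow> 1 - (1 - 1 / real n) ^ m
                          | Subbagging \<Rightarrow> real m / real n)"

end

theory Submission
  imports Defs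
begin

text \<open>Two probability vectors whose \<open>\<epsilon>\<close>-inflated argmax sets are disjoint are at Euclidean
  distance at least \<open>\<epsilon>\<close>. So the fraction of indices \<open>i\<close> whose removal makes the selections
  disjoint is at most \<open>\<epsilon>\<^sup>-\<^sup>2/n\<close> times \<open>\<Sum>i. \<parallel>\<mu>\<^sub>-\<^sub>i - \<mu>\<parallel>\<^sup>2\<close>, where \<open>\<mu>\<close> is the bagged prediction and
  \<open>\<mu>\<^sub>-\<^sub>i\<close> the bagged prediction without the \<open>i\<close>-th point, i.e. the average over the bags
  avoiding \<open>i\<close>. Those bags form a fixed fraction \<open>q\<close> of all bags, and the bags avoiding two given
  points a fixed fraction \<open>q\<^sub>2\<close>; a Gram-matrix computation bounds \<open>\<Sum>i. \<parallel>\<mu>\<^sub>-\<^sub>i - \<mu>\<parallel>\<^sup>2\<close> by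
  \<open>(q - q\<^sub>2)/q\<^sup>2\<close> times the variance of the base predictions over the bags, which is at most
  \<open>1 - 1/L\<close> on the simplex. Finally \<open>(n - 1)(q - q\<^sub>2) \<le> n q (1 - q)\<close> for both schemes, and
  \<open>q = 1 - p\<close>.\<close>

section \<open>Geometry of the inflated argmax\<close>

lemma norm_sq_vec_eq_sum: "(norm (x::real^'n))\<^sup>2 = (\<Sum>i\<in>UNIV. (x $ i)\<^sup>2)"
  by (simp add: norm_vec_def L2_set_def sum_nonneg)

lemma obtain_maximizer:
  fixes f :: "'a::finite \<Rightarrow> 'b::linorder"
  assumes "B \<noteq> {}"
  obtains j where "j \<in> B" "\<And>l. l \<in> B \<Longrightarrow> f l \<le> f j"
  by (metis assms finite obtains_MAX Max_ge finite_imageI imageI)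

lemma mem_inflated_argmax_if_maximal:
  fixes v :: "real^'l::finite"
  assumes "\<epsilon> > 0" "\<And>l. v $ l \<le> v $ j"
  shows "j \<in> inflated_argmax \<epsilon> v"
proof -
  let ?y = "v + (\<epsilon> / sqrt 2) *\<^sub>R axis j 1"
  have "?y \<in> R_region \<epsilon> j" using assms by (auto simp: R_region_def axis_def)
  then have "infdist v (R_region \<epsilon> j) \<le> dist v ?y" by (rule infdist_le)
  also have "dist v ?y = \<epsilon> / sqrt 2" using assms by (simp add: dist_norm)
  also have "\<dots> < \<epsilon>" using assms by (simp add: divide_less_eq)
  finally show ?thesis by (simp add: inflated_argmax_def)
qed

lemma truncation_mem_R_region:
  "(\<chi> l. if l = j then \<tau> + \<epsilon> / sqrt 2 else min (w $ l) \<tau>) \<in> R_region \<epsilon> j"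
  by (auto simp: R_region_def)

lemma dist_truncation_sq:
  fixes w :: "real^'l::finite"
  assumes "w $ j \<le> \<tau>"
  shows "(dist w (\<chi> l. if l = j then \<tau> + c else min (w $ l) \<tau>))\<^sup>2
           = (\<tau> + c - w $ j)\<^sup>2 + (\<Sum>l\<in>UNIV. (max 0 (w $ l - \<tau>))\<^sup>2)"
proof -
  have "(dist w (\<chi> l. if l = j then \<tau> + c else min (w $ l) \<tau>))\<^sup>2
        = (\<Sum>l\<in>UNIV. (if l = j then (\<tau> + c - w $ j)\<^sup>2 else 0) + (max 0 (w $ l - \<tau>))\<^sup>2)"
    unfolding dist_norm norm_sq_vec_eq_sum using assms
    by (intro sum.cong) (auto simp: max_def min_def power2_commute)
  then show ?thesis by (simp add: sum.distrib)
qed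

lemma not_mem_inflated_argmax_bound:
  fixes w :: "real^'l::finite"
  assumes "\<epsilon> > 0" "j \<notin> inflated_argmax \<epsilon> w" "w $ j \<le> \<tau>"
  shows "\<epsilon>\<^sup>2 \<le> (\<tau> + \<epsilon> / sqrt 2 - w $ j)\<^sup>2 + (\<Sum>l\<in>UNIV. (max 0 (w $ l - \<tau>))\<^sup>2)"
proof -
  let ?y = "\<chi> l. if l = j then \<tau> + \<epsilon> / sqrt 2 else min (w $ l) \<tau>"
  have "\<epsilon> \<le> dist w ?y"
    using assms(2) infdist_le[OF truncation_mem_R_region, of w \<epsilon> j \<tau> w]
    by (simp add: inflated_argmax_def)
  then have "\<epsilon>\<^sup>2 \<le> (dist w ?y)\<^sup>2" using assms(1) by (simp add: power_mono)
  then show ?thesis by (simp only: dist_truncation_sq[OF assms(3)])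
qed

lemma sum_sq_shift_ge:
  fixes p :: "'a \<Rightarrow> real"
  assumes "finite P" "\<And>l. l \<in> P \<Longrightarrow> 0 \<le> p l" "c > 0" "\<delta> \<ge> 0"
    and "c\<^sup>2 \<le> (\<Sum>l\<in>P. (p l)\<^sup>2)"
  shows "(c + \<delta>)\<^sup>2 \<le> (\<Sum>l\<in>P. (p l + \<delta>)\<^sup>2)"
proof -
  have "(\<Sum>l\<in>P. (p l)\<^sup>2) \<le> (\<Sum>l\<in>P. p l)\<^sup>2"
    using assms(1,2) by (induction P rule: finite_induct)
      (auto simp: power2_sum intro!: add_increasing2 mult_nonneg_nonneg sum_nonneg)
  then have "c\<^sup>2 \<le> (\<Sum>l\<in>P. p l)\<^sup>2" using assms(5) by linarith
  then have sum_ge: "c \<le> (\<Sum>l\<in>P. p l)"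
    using assms(2,3) by (meson power2_le_imp_le sum_nonneg)
  have "P \<noteq> {}" using assms(3,5) by auto
  then have "1 \<le> card P" using assms(1) by (simp add: Suc_le_eq card_gt_0_iff)
  have "(c + \<delta>)\<^sup>2 = c\<^sup>2 + 2 * \<delta> * c + \<delta>\<^sup>2" by (simp add: power2_sum)
  also have "\<dots> \<le> (\<Sum>l\<in>P. (p l)\<^sup>2) + 2 * \<delta> * (\<Sum>l\<in>P. p l) + real (card P) * \<delta>\<^sup>2"
    using assms(4,5) sum_ge mult_right_mono[of 1 "real (card P)" "\<delta>\<^sup>2"] \<open>1 \<le> card P\<close>
    by (intro add_mono mult_left_mono) auto
  also have "\<dots> = (\<Sum>l\<in>P. (p l + \<delta>)\<^sup>2)"
    by (simp add: power2_sum sum.distrib sum_distrib_left sum_distrib_right mult_ac)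
  finally show ?thesis .
qed

lemma sq_diff_ge_truncations:
  fixes a b \<tau> \<delta> :: real
  assumes "\<delta> \<ge> 0" "\<tau> < a \<Longrightarrow> b \<le> \<tau> - \<delta>"
  shows "(if \<tau> < a then (a - \<tau> + \<delta>)\<^sup>2 else 0) + (max 0 (b - \<tau>))\<^sup>2 \<le> (b - a)\<^sup>2"
proof (cases "\<tau> < a")
  case True
  then have "(a - \<tau> + \<delta>)\<^sup>2 \<le> (a - b)\<^sup>2" using assms by (intro power_mono) auto
  then show ?thesis using True assms by (simp add: power2_commute)
next
  case False
  then have "(max 0 (b - \<tau>))\<^sup>2 \<le> \<bar>b - a\<bar>\<^sup>2" by (intro power_mono) auto
  then show ?thesis using False by simp
qed

lemma dist_sq_ge_truncations:
  fixes v w :: "real^'l::finite"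
  assumes "\<delta> \<ge> 0" "\<And>l. \<tau> < w $ l \<Longrightarrow> v $ l \<le> \<tau> - \<delta>"
  shows "(\<Sum>l\<in>UNIV. if \<tau> < w $ l then (w $ l - \<tau> + \<delta>)\<^sup>2 else 0) + (\<Sum>l\<in>UNIV. (max 0 (v $ l - \<tau>))\<^sup>2)
           \<le> (dist v w)\<^sup>2"
proof -
  have "(\<Sum>l\<in>UNIV. (if \<tau> < w $ l then (w $ l - \<tau> + \<delta>)\<^sup>2 else 0) + (max 0 (v $ l - \<tau>))\<^sup>2)
      \<le> (\<Sum>l\<in>UNIV. (v $ l - w $ l)\<^sup>2)"
    using assms by (intro sum_mono sq_diff_ge_truncations)
  then show ?thesis by (simp add: sum.distrib dist_norm norm_sq_vec_eq_sum)
qed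

text \<open>The labels where \<open>w\<close> exceeds \<open>\<tau>\<close> carry, by the
  first test, squared excess at least \<open>\<epsilon>\<^sup>2/2\<close>; in \<open>v\<close> they lie below \<open>v$m' = \<tau> - \<delta>\<close>, so on them
  \<open>v - w\<close> is larger still by \<open>\<delta>\<close>. Adding the second test, for \<open>m'\<close> in \<open>v\<close> at the same height
  \<open>\<tau>\<close>, gives \<open>dist v w \<ge> \<epsilon>\<close>.\<close>
lemma inflated_argmax_separation:
  fixes w v :: "real^'l::finite"
  assumes "\<epsilon> > 0" "m \<notin> inflated_argmax \<epsilon> w" "m' \<notin> inflated_argmax \<epsilon> v"
    and cross: "\<And>j. \<not> (w $ m < w $ j \<and> v $ m' < v $ j)"
    and "v $ m' \<le> w $ m"
  shows "\<epsilon> \<le> dist v w"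
proof -
  define c where "c = \<epsilon> / sqrt 2"
  define \<tau> where "\<tau> = w $ m"
  define \<delta> where "\<delta> = w $ m - v $ m'"
  define P where "P = {l. \<tau> < w $ l}"
  have "c > 0" "\<delta> \<ge> 0" using assms(1,5) by (simp_all add: c_def \<delta>_def)
  have "(\<Sum>l\<in>P. (w $ l - \<tau>)\<^sup>2) = (\<Sum>l\<in>UNIV. (max 0 (w $ l - \<tau>))\<^sup>2)"
    by (intro sum.mono_neutral_cong_left) (auto simp: P_def)
  moreover have "\<epsilon>\<^sup>2 = 2 * c\<^sup>2" by (simp add: c_def power_divide)
  ultimately have "c\<^sup>2 \<le> (\<Sum>l\<in>P. (w $ l - \<tau>)\<^sup>2)"
    using not_mem_inflated_argmax_bound[OF assms(1,2), of \<tau>] by (simp add: \<tau>_def c_def)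
  then have "(c + \<delta>)\<^sup>2 \<le> (\<Sum>l\<in>P. (w $ l - \<tau> + \<delta>)\<^sup>2)"
    using \<open>c > 0\<close> \<open>\<delta> \<ge> 0\<close> by (intro sum_sq_shift_ge) (auto simp: P_def)
  also have "\<dots> = (\<Sum>l\<in>UNIV. if \<tau> < w $ l then (w $ l - \<tau> + \<delta>)\<^sup>2 else 0)"
    by (simp add: P_def sum.If_cases)
  finally have "(c + \<delta>)\<^sup>2 + \<epsilon>\<^sup>2
      \<le> (\<Sum>l\<in>UNIV. if \<tau> < w $ l then (w $ l - \<tau> + \<delta>)\<^sup>2 else 0) + (\<delta> + c)\<^sup>2
         + (\<Sum>l\<in>UNIV. (max 0 (v $ l - \<tau>))\<^sup>2)"
    using not_mem_inflated_argmax_bound[OF assms(1,3), of \<tau>] assms(5)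
    by (simp add: \<tau>_def \<delta>_def c_def algebra_simps)
  also have "\<dots> \<le> (\<delta> + c)\<^sup>2 + (dist v w)\<^sup>2"
    using dist_sq_ge_truncations[OF \<open>\<delta> \<ge> 0\<close>, of \<tau> w v] cross by (force simp: \<tau>_def \<delta>_def)
  finally have "\<epsilon>\<^sup>2 \<le> (dist v w)\<^sup>2" by (simp add: add.commute)
  then show ?thesis by (rule power2_le_imp_le) simp
qed

lemma dist_ge_if_disjoint_inflated_argmax:
  fixes w v :: "real^'l::finite"
  assumes "\<epsilon> > 0" and disjoint: "inflated_argmax \<epsilon> w \<inter> inflated_argmax \<epsilon> v = {}"
  shows "\<epsilon> \<le> dist v w"
proof -
  obtain jv where "\<And>l. v $ l \<le> v $ jv"
    by (rule obtain_maximizer[where B = UNIV and f = "\<lambda>l. v $ l"]) auto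
  then have "jv \<notin> inflated_argmax \<epsilon> w"
    using disjoint mem_inflated_argmax_if_maximal[OF assms(1)] by blast
  then have "- inflated_argmax \<epsilon> w \<noteq> {}" by blast
  then obtain m where m: "m \<in> - inflated_argmax \<epsilon> w"
    "\<And>l. l \<in> - inflated_argmax \<epsilon> w \<Longrightarrow> w $ l \<le> w $ m"
    by (rule obtain_maximizer[where f = "\<lambda>l. w $ l"]) blast
  obtain jw where "\<And>l. w $ l \<le> w $ jw"
    by (rule obtain_maximizer[where B = UNIV and f = "\<lambda>l. w $ l"]) auto
  then have "jw \<notin> inflated_argmax \<epsilon> v"
    using disjoint mem_inflated_argmax_if_maximal[OF assms(1)] by blast
  then have "- inflated_argmax \<epsilon> v \<noteq> {}" by blast
  then obtain m' where m': "m' \<in> - inflated_argmax \<epsilon> v"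
    "\<And>l. l \<in> - inflated_argmax \<epsilon> v \<Longrightarrow> v $ l \<le> v $ m'"
    by (rule obtain_maximizer[where f = "\<lambda>l. v $ l"]) blast
  have cross: "\<not> (w $ m < w $ j \<and> v $ m' < v $ j)" for j
    using m(2)[of j] m'(2)[of j] disjoint by force
  show ?thesis
  proof (cases "v $ m' \<le> w $ m")
    case True
    with m(1) m'(1) cross show ?thesis by (intro inflated_argmax_separation[OF assms(1)]) auto
  next
    case False
    with m(1) m'(1) cross have "\<epsilon> \<le> dist w v"
      by (intro inflated_argmax_separation[OF assms(1)]) auto
    then show ?thesis by (simp add: dist_commute)
  qed
qed

lemma disjoint_inflated_argmax_indicator_le:
  fixes w v :: "real^'l::finite"
  assumes "\<epsilon> > 0"
  shows "(if inflated_argmax \<epsilon> w \<inter> inflated_argmax \<epsilon> v = {} then 1 else 0) \<le> (dist v w)\<^sup>2 / \<epsilon>\<^sup>2"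
proof (cases "inflated_argmax \<epsilon> w \<inter> inflated_argmax \<epsilon> v = {}")
  case True
  then have "\<epsilon>\<^sup>2 \<le> (dist v w)\<^sup>2"
    using assms dist_ge_if_disjoint_inflated_argmax by (simp add: power_mono)
  then show ?thesis using True assms by simp
qed simp

section \<open>Means over subsets\<close>

definition set_mean :: "'r set \<Rightarrow> ('r \<Rightarrow> 'a::real_vector) \<Rightarrow> 'a" where
  "set_mean S f = (1 / real (card S)) *\<^sub>R (\<Sum>r\<in>S. f r)"

lemma sum_eq_card_scaleR_set_mean: "(\<Sum>r\<in>S. f r) = real (card S) *\<^sub>R set_mean S f"
  by (cases "card S = 0") (auto simp: set_mean_def card_eq_0_iff)

lemma set_mean_bij_betw: "bij_betw h T S \<Longrightarrow> set_mean S g = set_mean T (\<lambda>r. g (h r))"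
  by (simp add: set_mean_def bij_betw_same_card sum.reindex_bij_betw)

lemma sum_norm_sq_deviation_set_mean:
  fixes f :: "'r \<Rightarrow> 'a::real_inner"
  shows "(\<Sum>r\<in>S. (norm (f r - set_mean S f))\<^sup>2)
           = (\<Sum>r\<in>S. (norm (f r))\<^sup>2) - real (card S) * (norm (set_mean S f))\<^sup>2"
proof -
  let ?\<mu> = "set_mean S f"
  have "(\<Sum>r\<in>S. (norm (f r - ?\<mu>))\<^sup>2) = (\<Sum>r\<in>S. (norm (f r))\<^sup>2 - 2 * inner (f r) ?\<mu> + (norm ?\<mu>)\<^sup>2)"
    unfolding power2_norm_eq_inner
    by (intro sum.cong) (auto simp: inner_diff_left inner_diff_right inner_commute)
  also have "\<dots> = (\<Sum>r\<in>S. (norm (f r))\<^sup>2) - 2 * inner (\<Sum>r\<in>S. f r) ?\<mu> + real (card S) * (norm ?\<mu>)\<^sup>2"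
    by (simp add: sum.distrib sum_subtractf sum_distrib_left inner_sum_left)
  finally show ?thesis
    by (simp add: sum_eq_card_scaleR_set_mean[of f S] power2_norm_eq_inner)
qed

lemma sum_inner_le_of_sum_norm_sq_le:
  fixes x y :: "'r \<Rightarrow> 'a::real_inner"
  assumes "(\<Sum>r\<in>S. (norm (y r))\<^sup>2) \<le> k * (\<Sum>r\<in>S. inner (x r) (y r))" "0 \<le> k"
  shows "(\<Sum>r\<in>S. inner (x r) (y r)) \<le> k * (\<Sum>r\<in>S. (norm (x r))\<^sup>2)"
proof (cases "(\<Sum>r\<in>S. inner (x r) (y r)) > 0")
  case True
  let ?W = "\<Sum>r\<in>S. inner (x r) (y r)"
  have "?W \<le> (\<Sum>r\<in>S. norm (x r) * norm (y r))"
    by (intro sum_mono) (simp add: norm_cauchy_schwarz)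
  then have "?W\<^sup>2 \<le> (\<Sum>r\<in>S. norm (x r) * norm (y r))\<^sup>2"
    using True by (intro power_mono) auto
  also have "\<dots> \<le> (\<Sum>r\<in>S. (norm (x r))\<^sup>2) * (\<Sum>r\<in>S. (norm (y r))\<^sup>2)"
    by (rule Cauchy_Schwarz_ineq_sum)
  also have "\<dots> \<le> (\<Sum>r\<in>S. (norm (x r))\<^sup>2) * (k * ?W)"
    using assms(1) by (intro mult_left_mono sum_nonneg) auto
  finally have "?W * ?W \<le> (k * (\<Sum>r\<in>S. (norm (x r))\<^sup>2)) * ?W"
    by (simp add: power2_eq_square mult_ac)
  then show ?thesis using True by simp
next
  case False
  moreover have "0 \<le> k * (\<Sum>r\<in>S. (norm (x r))\<^sup>2)" using assms(2) by (simp add: sum_nonneg)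
  ultimately show ?thesis by linarith
qed

lemma sum_norm_sq_combination_le:
  fixes c :: "'i \<Rightarrow> 'r \<Rightarrow> real" and w :: "'i \<Rightarrow> 'a::real_inner"
  assumes "finite I"
    and gram: "\<And>i j. i \<in> I \<Longrightarrow> j \<in> I \<Longrightarrow> (\<Sum>r\<in>S. c i r * c j r) = (if i = j then a else 0) + b"
    and "b \<le> 0"
  shows "(\<Sum>r\<in>S. (norm (\<Sum>i\<in>I. c i r *\<^sub>R w i))\<^sup>2) \<le> a * (\<Sum>i\<in>I. (norm (w i))\<^sup>2)"
proof -
  have "(\<Sum>r\<in>S. (norm (\<Sum>i\<in>I. c i r *\<^sub>R w i))\<^sup>2)
        = (\<Sum>i\<in>I. \<Sum>j\<in>I. (\<Sum>r\<in>S. c i r * c j r) * inner (w i) (w j))"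
    by (simp add: power2_norm_eq_inner inner_sum_left inner_sum_right sum_distrib_left
        sum_distrib_right sum.swap[of _ S] mult_ac inner_commute)
  also have "\<dots> = (\<Sum>i\<in>I. \<Sum>j\<in>I. (if i = j then a * inner (w i) (w j) else 0) + b * inner (w i) (w j))"
    by (intro sum.cong refl) (simp add: gram distrib_right)
  also have "\<dots> = a * (\<Sum>i\<in>I. (norm (w i))\<^sup>2) + b * (norm (\<Sum>i\<in>I. w i))\<^sup>2"
    using assms(1) by (simp add: sum.distrib sum_distrib_left power2_norm_eq_inner
        inner_sum_left inner_sum_right inner_commute)
  also have "\<dots> \<le> a * (\<Sum>i\<in>I. (norm (w i))\<^sup>2)"
    using assms(3) by (simp add: mult_nonpos_nonneg)
  finally show ?thesis .
qed

lemma sum_of_bool_scaleR_deviation: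
  fixes f :: "'r \<Rightarrow> 'a::real_vector"
  assumes "finite S" "T \<subseteq> S"
  shows "(\<Sum>r\<in>S. of_bool (r \<in> T) *\<^sub>R (f r - \<mu>)) = real (card T) *\<^sub>R (set_mean T f - \<mu>)"
proof -
  have "(\<Sum>r\<in>S. of_bool (r \<in> T) *\<^sub>R (f r - \<mu>)) = (\<Sum>r\<in>T. f r - \<mu>)"
    using assms by (intro sum.mono_neutral_cong_right) auto
  then show ?thesis
    by (simp add: sum_subtractf sum_eq_card_scaleR_set_mean[of f T] scaleR_diff_right sum_constant_scaleR)
qed

lemma sum_centered_of_bool_products:
  assumes "finite S" "T \<subseteq> S" "T' \<subseteq> S"
  shows "(\<Sum>r\<in>S. (of_bool (r \<in> T) - q) * (of_bool (r \<in> T') - q))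
           = real (card (T \<inter> T')) - q * real (card T) - q * real (card T') + real (card S) * q\<^sup>2"
  using assms finite_subset[OF assms(2,1)]
  by (simp add: algebra_simps sum.distrib sum_subtractf sum_distrib_left power2_eq_square Int_absorb1)

text \<open>With \<open>x r = f r - \<mu>\<close>, \<open>w i = \<Sum>r\<in>T i. x r\<close> and \<open>y r = \<Sum>i. (1{r \<in> T i} - q) w i\<close>,
  the identity \<open>\<Sum>r. x r = 0\<close> gives \<open>\<Sum>i. \<parallel>w i\<parallel>\<^sup>2 = \<Sum>r. \<langle>x r, y r\<rangle>\<close>, and the Gram bound gives
  \<open>\<Sum>r. \<parallel>y r\<parallel>\<^sup>2 \<le> N (q - q2) \<Sum>i. \<parallel>w i\<parallel>\<^sup>2\<close>.\<close>
lemma sum_sq_dist_subset_means_le: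
  fixes f :: "'r \<Rightarrow> 'a::real_inner" and T :: "'i \<Rightarrow> 'r set"
  assumes "finite S" "S \<noteq> {}" "finite I"
    and sub: "\<And>i. i \<in> I \<Longrightarrow> T i \<subseteq> S"
    and card1: "\<And>i. i \<in> I \<Longrightarrow> real (card (T i)) = q * real (card S)"
    and card2: "\<And>i j. i \<in> I \<Longrightarrow> j \<in> I \<Longrightarrow> i \<noteq> j \<Longrightarrow> real (card (T i \<inter> T j)) = q2 * real (card S)"
    and "0 < q" "q2 \<le> q" "q2 \<le> q\<^sup>2"
  shows "(\<Sum>i\<in>I. (norm (set_mean (T i) f - set_mean S f))\<^sup>2)
           \<le> (q - q2) / q\<^sup>2 * ((1 / real (card S)) * (\<Sum>r\<in>S. (norm (f r - set_mean S f))\<^sup>2))"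
proof -
  define N where "N = real (card S)"
  define \<mu> where "\<mu> = set_mean S f"
  define x where "x r = f r - \<mu>" for r
  define c where "c i r = of_bool (r \<in> T i) - q" for i r
  define w where "w i = (\<Sum>r\<in>S. of_bool (r \<in> T i) *\<^sub>R x r)" for i
  define y where "y r = (\<Sum>i\<in>I. c i r *\<^sub>R w i)" for r
  define W where "W = (\<Sum>i\<in>I. (norm (w i))\<^sup>2)"
  have "N > 0" using assms(1,2) by (simp add: N_def card_gt_0_iff)
  have sum_x: "(\<Sum>r\<in>S. x r) = 0"
    by (simp add: x_def sum_subtractf \<mu>_def sum_eq_card_scaleR_set_mean[of f S] sum_constant_scaleR)
  have "W = (\<Sum>r\<in>S. inner (x r) (y r))"
  proof -
    have "(\<Sum>r\<in>S. inner (x r) (y r)) = (\<Sum>i\<in>I. inner (\<Sum>r\<in>S. c i r *\<^sub>R x r) (w i))"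
      by (simp add: y_def inner_sum_right inner_sum_left sum.swap[of _ S])
    also have "\<dots> = (\<Sum>i\<in>I. inner (w i - q *\<^sub>R (\<Sum>r\<in>S. x r)) (w i))"
      by (simp add: c_def w_def scaleR_diff_left sum_subtractf scaleR_sum_right)
    finally show ?thesis by (simp add: sum_x W_def power2_norm_eq_inner)
  qed
  moreover have "(\<Sum>r\<in>S. (norm (y r))\<^sup>2) \<le> N * (q - q2) * W"
    unfolding y_def W_def using assms(3,9) \<open>N > 0\<close>
  proof (intro sum_norm_sq_combination_le)
    show "(\<Sum>r\<in>S. c i r * c j r) = (if i = j then N * (q - q2) else 0) + N * (q2 - q\<^sup>2)"
      if "i \<in> I" "j \<in> I" for i j
      using sum_centered_of_bool_products[OF assms(1) sub[OF that(1)] sub[OF that(2)], of q]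
        card1[OF that(1)] card1[OF that(2)] card2[OF that]
      by (cases "i = j") (simp_all add: c_def N_def algebra_simps power2_eq_square)
  qed (auto simp: mult_nonneg_nonpos)
  ultimately have W_le: "W \<le> N * (q - q2) * (\<Sum>r\<in>S. (norm (x r))\<^sup>2)"
    using assms(8) \<open>N > 0\<close> by (simp add: sum_inner_le_of_sum_norm_sq_le)
  have "(\<Sum>i\<in>I. (norm (set_mean (T i) f - \<mu>))\<^sup>2) = W / (q * N)\<^sup>2"
    using \<open>0 < q\<close> card1 sub assms(1,2)
    by (simp add: W_def w_def x_def sum_of_bool_scaleR_deviation N_def sum_divide_distrib
        power_mult_distrib abs_mult cong: sum.cong)
  also have "\<dots> \<le> N * (q - q2) * (\<Sum>r\<in>S. (norm (x r))\<^sup>2) / (q * N)\<^sup>2"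
    using W_le by (rule divide_right_mono) simp
  also have "\<dots> = (q - q2) / q\<^sup>2 * ((1 / N) * (\<Sum>r\<in>S. (norm (x r))\<^sup>2))"
    using \<open>0 < q\<close> \<open>N > 0\<close> by (simp add: power2_eq_square field_simps)
  finally show ?thesis by (simp add: \<mu>_def x_def N_def)
qed

lemma norm_sq_le_1_if_prob_simplex:
  assumes "(z::real^'l::finite) \<in> prob_simplex"
  shows "(norm z)\<^sup>2 \<le> 1"
proof -
  have nonneg: "\<And>i. 0 \<le> z $ i" and sum_1: "(\<Sum>i\<in>UNIV. z $ i) = 1"
    using assms by (auto simp: prob_simplex_def)
  then have "\<And>i. z $ i \<le> 1" using member_le_sum[of _ UNIV "\<lambda>i. z $ i"] by auto
  then have "\<And>i. (z $ i)\<^sup>2 \<le> z $ i" using nonneg by (simp add: power2_eq_square mult_left_le)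
  then have "(\<Sum>i\<in>UNIV. (z $ i)\<^sup>2) \<le> (\<Sum>i\<in>UNIV. z $ i)" by (rule sum_mono)
  then show ?thesis using sum_1 by (simp add: norm_sq_vec_eq_sum)
qed

lemma inverse_card_le_norm_sq:
  assumes "(\<Sum>i\<in>UNIV. (z::real^'l::finite) $ i) = 1"
  shows "1 / real CARD('l) \<le> (norm z)\<^sup>2"
  using sum_squared_le_sum_of_squares[of "\<lambda>i. z $ i" UNIV] assms
  by (simp add: norm_sq_vec_eq_sum field_simps)

lemma prob_simplex_variance_le:
  fixes f :: "'r \<Rightarrow> real^'l::finite"
  assumes "finite S" "S \<noteq> {}" "\<And>r. r \<in> S \<Longrightarrow> f r \<in> prob_simplex"
  shows "(1 / real (card S)) * (\<Sum>r\<in>S. (norm (f r - set_mean S f))\<^sup>2) \<le> 1 - 1 / real CARD('l)"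
proof -
  define N where "N = real (card S)"
  have "N > 0" using assms(1,2) by (simp add: N_def card_gt_0_iff)
  have "(\<Sum>r\<in>S. (norm (f r))\<^sup>2) \<le> (\<Sum>r\<in>S. 1)"
    using assms(3) norm_sq_le_1_if_prob_simplex by (intro sum_mono) auto
  then have "(\<Sum>r\<in>S. (norm (f r))\<^sup>2) \<le> N" by (simp add: N_def)
  moreover have "(\<Sum>i\<in>UNIV. set_mean S f $ i) = (1 / N) * (\<Sum>r\<in>S. \<Sum>i\<in>UNIV. f r $ i)"
    by (simp add: set_mean_def N_def sum_component sum_distrib_left sum.swap[of _ UNIV])
  then have "(\<Sum>i\<in>UNIV. set_mean S f $ i) = 1"
    using assms(3) \<open>N > 0\<close> by (simp add: prob_simplex_def N_def)
  then have "N * (1 / real CARD('l)) \<le> N * (norm (set_mean S f))\<^sup>2"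
    using \<open>N > 0\<close> by (intro mult_left_mono inverse_card_le_norm_sq) auto
  ultimately have "(\<Sum>r\<in>S. (norm (f r - set_mean S f))\<^sup>2) \<le> N * (1 - 1 / real CARD('l))"
    unfolding sum_norm_sq_deviation_set_mean N_def by (simp add: algebra_simps)
  then show ?thesis using \<open>N > 0\<close> by (simp add: N_def field_simps)
qed

section \<open>Counting bags\<close>

definition bag_seqs :: "bag_scheme \<Rightarrow> nat set \<Rightarrow> nat \<Rightarrow> nat list set" where
  "bag_seqs s X m = {r. length r = m \<and> set r \<subseteq> X \<and> (s = Subbagging \<longrightarrow> distinct r)}"

lemma index_seqs_eq_bag_seqs: "index_seqs s N m = bag_seqs s {..<N} m"
  by (simp add: index_seqs_def bag_seqs_def)

lemma bag_seqs_avoiding: "{r \<in> bag_seqs s X m. i \<notin> set r} = bag_seqs s (X - {i}) m"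
  by (auto simp: bag_seqs_def)

lemma finite_bag_seqs: "finite X \<Longrightarrow> finite (bag_seqs s X m)"
  by (rule finite_subset[OF _ finite_lists_length_eq[of X m]]) (auto simp: bag_seqs_def)

lemma bij_betw_map_bag_seqs:
  assumes "inj_on h X"
  shows "bij_betw (map h) (bag_seqs s X m) (bag_seqs s (h ` X) m)"
proof (rule bij_betw_imageI)
  show "inj_on (map h) (bag_seqs s X m)"
    by (rule inj_on_mapI, rule inj_on_subset[OF assms]) (auto simp: bag_seqs_def)
  show "map h ` bag_seqs s X m = bag_seqs s (h ` X) m"
  proof
    show "map h ` bag_seqs s X m \<subseteq> bag_seqs s (h ` X) m"
      using assms by (fastforce simp: bag_seqs_def distinct_map intro: inj_on_subset)
    show "bag_seqs s (h ` X) m \<subseteq> map h ` bag_seqs s X m"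
    proof
      fix r assume r: "r \<in> bag_seqs s (h ` X) m"
      then have "map (inv_into X h) r \<in> bag_seqs s X m"
        by (auto simp: bag_seqs_def distinct_map inv_into_into inj_on_inv_into)
      moreover have "map h (map (inv_into X h) r) = r"
        unfolding map_map using r by (intro map_idI) (auto simp: bag_seqs_def f_inv_into_f)
      ultimately show "r \<in> map h ` bag_seqs s X m" by (metis image_eqI)
    qed
  qed
qed

definition num_bag_seqs :: "bag_scheme \<Rightarrow> nat \<Rightarrow> nat \<Rightarrow> nat" where
  "num_bag_seqs s k m =
     (case s of Bootstrap \<Rightarrow> k ^ m | Subbagging \<Rightarrow> if m \<le> k then \<Prod>{k - m + 1..k} else 0)"

lemma card_bag_seqs:
  assumes "finite X"
  shows "card (bag_seqs s X m) = num_bag_seqs s (card X) m"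
proof (cases s)
  case Bootstrap
  then have "bag_seqs s X m = {r. set r \<subseteq> X \<and> length r = m}" by (auto simp: bag_seqs_def)
  then show ?thesis using assms by (simp add: card_lists_length_eq num_bag_seqs_def Bootstrap)
next
  case Subbagging
  have seqs: "bag_seqs Subbagging X m = {r. length r = m \<and> distinct r \<and> set r \<subseteq> X}"
    by (auto simp: bag_seqs_def)
  show ?thesis
  proof (cases "m \<le> card X")
    case True
    then show ?thesis using assms
      by (simp add: seqs card_lists_distinct_length_eq num_bag_seqs_def Subbagging)
  next
    case False
    have "length r \<le> card X" if "set r \<subseteq> X" "distinct r" for r :: "nat list"
      using card_mono[OF assms that(1)] distinct_card[OF that(2)] by simp
    then have "bag_seqs Subbagging X m = {}" using False by (auto simp: seqs distinct_card)
    then show ?thesis using False by (simp add: num_bag_seqs_def Subbagging)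
  qed
qed

lemma card_index_seqs: "card (index_seqs s n m) = num_bag_seqs s n m"
  by (simp add: index_seqs_eq_bag_seqs card_bag_seqs)

lemma card_index_seqs_avoiding:
  "i < n \<Longrightarrow> card {r \<in> index_seqs s n m. i \<notin> set r} = num_bag_seqs s (n - 1) m"
  by (simp add: index_seqs_eq_bag_seqs bag_seqs_avoiding card_bag_seqs)

lemma card_index_seqs_avoiding2:
  assumes "i < n" "j < n" "i \<noteq> j"
  shows "card {r \<in> index_seqs s n m. i \<notin> set r \<and> j \<notin> set r} = num_bag_seqs s (n - 2) m"
proof -
  have "{r \<in> index_seqs s n m. i \<notin> set r \<and> j \<notin> set r} = bag_seqs s ({..<n} - {i} - {j}) m"
    by (auto simp: index_seqs_eq_bag_seqs bag_seqs_def)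
  moreover have "card ({..<n} - {i} - {j}) = n - 2" using assms by (simp add: card_Diff_singleton_if)
  ultimately show ?thesis by (simp add: card_bag_seqs)
qed

lemma num_bag_seqs_Subbagging_mult_fact:
  "m \<le> k \<Longrightarrow> num_bag_seqs Subbagging k m * fact (k - m) = (fact k :: nat)"
  by (simp add: num_bag_seqs_def fact_eq_fact_times[of "k - m" k] Suc_diff_le)

lemma num_bag_seqs_Subbagging_Suc:
  "num_bag_seqs Subbagging (Suc k) m * (Suc k - m) = Suc k * num_bag_seqs Subbagging k m"
proof (cases "m \<le> k")
  case True
  then have "num_bag_seqs Subbagging (Suc k) m * (Suc k - m) * fact (k - m)
      = num_bag_seqs Subbagging (Suc k) m * fact (Suc k - m)"
    by (simp add: Suc_diff_le algebra_simps)
  also have "\<dots> = Suc k * fact k"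
    using True num_bag_seqs_Subbagging_mult_fact[of m "Suc k"] by simp
  also have "\<dots> = Suc k * num_bag_seqs Subbagging k m * fact (k - m)"
    using True num_bag_seqs_Subbagging_mult_fact[of m k] by (simp only: mult.assoc)
  finally show ?thesis by simp
next
  case False
  then show ?thesis by (simp add: num_bag_seqs_def)
qed

lemma num_bag_seqs_Subbagging_pos: "m \<le> k \<Longrightarrow> 0 < num_bag_seqs Subbagging k m"
  by (auto simp: num_bag_seqs_def intro!: prod_pos)

definition avoid_frac :: "bag_scheme \<Rightarrow> nat \<Rightarrow> nat \<Rightarrow> nat \<Rightarrow> real" where
  "avoid_frac s n m j = real (num_bag_seqs s (n - j) m) / real (num_bag_seqs s n m)"

lemma avoid_frac_Bootstrap:
  "0 < n \<Longrightarrow> j \<le> n \<Longrightarrow> avoid_frac Bootstrap n m j = (1 - real j / real n) ^ m"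
  by (simp add: avoid_frac_def num_bag_seqs_def of_nat_diff power_divide[symmetric] diff_divide_distrib)

lemma avoid_frac_Subbagging_1:
  assumes "m < n"
  shows "avoid_frac Subbagging n m 1 = (real n - real m) / real n"
proof -
  have "Suc (n - 1) = n" using assms by simp
  then have "real (num_bag_seqs Subbagging n m) * real (n - m) = real n * num_bag_seqs Subbagging (n - 1) m"
    using num_bag_seqs_Subbagging_Suc[of "n - 1" m] by (metis of_nat_mult)
  then show ?thesis
    using assms num_bag_seqs_Subbagging_pos[of m n] by (simp add: avoid_frac_def of_nat_diff field_simps)
qed

lemma avoid_frac_Subbagging_2:
  assumes "m < n" "2 \<le> n"
  shows "avoid_frac Subbagging n m 2 = avoid_frac Subbagging n m 1 * (real n - 1 - real m) / (real n - 1)"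
proof -
  have "Suc (n - 2) = n - 1" using assms by simp
  then have "real (num_bag_seqs Subbagging (n - 1) m) * real (n - 1 - m)
      = real (n - 1) * num_bag_seqs Subbagging (n - 2) m"
    using num_bag_seqs_Subbagging_Suc[of "n - 2" m] by (metis of_nat_mult)
  then have eq: "real (num_bag_seqs Subbagging (n - 1) m) * (real n - 1 - real m)
      = (real n - 1) * num_bag_seqs Subbagging (n - 2) m"
    using assms by (simp add: of_nat_diff algebra_simps)
  have "real n - 1 > 0" using assms by simp
  then have "avoid_frac Subbagging n m 2
      = (real n - 1) * num_bag_seqs Subbagging (n - 2) m / ((real n - 1) * num_bag_seqs Subbagging n m)"
    by (simp add: avoid_frac_def)
  also have "\<dots> = avoid_frac Subbagging n m 1 * (real n - 1 - real m) / (real n - 1)"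
    by (simp flip: eq add: avoid_frac_def)
  finally show ?thesis .
qed

lemma power_diff_le_mult:
  fixes x y :: real
  assumes "0 \<le> y" "y \<le> x"
  shows "x ^ Suc k - y ^ Suc k \<le> real (Suc k) * (x - y) * x ^ k"
proof (induction k)
  case (Suc k)
  have "x ^ Suc (Suc k) - y ^ Suc (Suc k) = x * (x ^ Suc k - y ^ Suc k) + y ^ Suc k * (x - y)"
    by (simp add: algebra_simps)
  also have "\<dots> \<le> x * (real (Suc k) * (x - y) * x ^ k) + x ^ Suc k * (x - y)"
  proof (rule add_mono)
    show "x * (x ^ Suc k - y ^ Suc k) \<le> x * (real (Suc k) * (x - y) * x ^ k)"
      using Suc assms by (intro mult_left_mono) auto
    show "y ^ Suc k * (x - y) \<le> x ^ Suc k * (x - y)"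
      using assms by (intro mult_right_mono power_mono) auto
  qed
  also have "\<dots> = real (Suc (Suc k)) * (x - y) * x ^ Suc k" by (simp add: algebra_simps)
  finally show ?case .
qed simp

lemma mult_le_power_diff:
  fixes x y :: real
  assumes "0 \<le> y" "y \<le> x"
  shows "real (Suc k) * (x - y) * y ^ k \<le> x ^ Suc k - y ^ Suc k"
proof (induction k)
  case (Suc k)
  have "y ^ Suc k \<le> x ^ Suc k" by (rule power_mono[OF assms(2,1)])
  then have "0 \<le> x ^ Suc k - y ^ Suc k" by linarith
  have "real (Suc (Suc k)) * (x - y) * y ^ Suc k = y * (real (Suc k) * (x - y) * y ^ k) + y ^ Suc k * (x - y)"
    by (simp add: algebra_simps)
  also have "\<dots> \<le> y * (x ^ Suc k - y ^ Suc k) + y ^ Suc k * (x - y)"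
    using Suc assms by (simp add: mult_left_mono)
  also have "\<dots> \<le> x * (x ^ Suc k - y ^ Suc k) + y ^ Suc k * (x - y)"
    using assms \<open>0 \<le> x ^ Suc k - y ^ Suc k\<close> by (simp add: mult_right_mono)
  also have "\<dots> = x ^ Suc (Suc k) - y ^ Suc (Suc k)" by (simp add: algebra_simps)
  finally show ?case .
qed simp

text \<open>Split \<open>A - b\<^sup>m = (A - A\<^sup>2) + (A\<^sup>2 - b\<^sup>m)\<close> with \<open>A = a\<^sup>m\<close>. Since \<open>a\<^sup>2 - b = 1/n\<^sup>2\<close> and
  \<open>n a = n - 1\<close>, the two power-difference bounds give \<open>(n - 1) (A\<^sup>2 - b\<^sup>m) \<le> A K \<le> A (1 - A)\<close>
  with \<open>K = m a\<^sup>m\<^sup>-\<^sup>1 / n\<close>.\<close>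
lemma bootstrap_avoid_ineq:
  fixes n :: real
  assumes "2 \<le> n"
  defines "a \<equiv> 1 - 1 / n" and "b \<equiv> 1 - 2 / n"
  shows "(n - 1) * (a ^ Suc k - b ^ Suc k) \<le> n * a ^ Suc k * (1 - a ^ Suc k)"
proof -
  define A where "A = a ^ Suc k"
  define K where "K = real (Suc k) * a ^ k / n"
  have "0 \<le> a" "a \<le> 1" "0 \<le> b" "b \<le> a\<^sup>2" "a\<^sup>2 - b = 1 / n\<^sup>2" "n * a = n - 1"
    using assms(1) by (auto simp: a_def b_def power2_eq_square field_simps)
  have "A\<^sup>2 = (a\<^sup>2) ^ Suc k" unfolding A_def by (metis power_mult mult.commute)
  moreover have "(a\<^sup>2) ^ Suc k - b ^ Suc k \<le> real (Suc k) * (a\<^sup>2 - b) * (a\<^sup>2) ^ k"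
    using \<open>0 \<le> b\<close> \<open>b \<le> a\<^sup>2\<close> by (rule power_diff_le_mult)
  ultimately have "(n - 1) * (A\<^sup>2 - b ^ Suc k) \<le> (n - 1) * (real (Suc k) * (a\<^sup>2 - b) * (a\<^sup>2) ^ k)"
    using assms(1) by (simp only:) (rule mult_left_mono, simp_all)
  also have "\<dots> = (n * a) * (real (Suc k) * (1 / n\<^sup>2) * (a\<^sup>2) ^ k)"
    using \<open>a\<^sup>2 - b = 1 / n\<^sup>2\<close> \<open>n * a = n - 1\<close> by simp
  also have "\<dots> = A * K"
    using assms(1) by (simp add: A_def K_def power2_eq_square power_mult_distrib field_simps)
  finally have upper: "(n - 1) * (A\<^sup>2 - b ^ Suc k) \<le> A * K" .
  have "real (Suc k) * (1 - a) * a ^ k \<le> 1 ^ Suc k - a ^ Suc k"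
    using \<open>0 \<le> a\<close> \<open>a \<le> 1\<close> by (rule mult_le_power_diff)
  then have "A * K \<le> A * (1 - A)"
    using \<open>0 \<le> a\<close> by (intro mult_left_mono) (simp_all add: A_def K_def a_def)
  then have "(n - 1) * (A - b ^ Suc k) \<le> (n - 1) * (A - A\<^sup>2) + A * (1 - A)"
    using upper by (simp add: algebra_simps)
  also have "\<dots> = n * A * (1 - A)" by (simp add: algebra_simps power2_eq_square)
  finally show ?thesis by (simp add: A_def)
qed

lemma avoid_frac_bounds_Bootstrap:
  assumes "2 \<le> n" "1 \<le> m"
  defines "q \<equiv> avoid_frac Bootstrap n m 1" and "q2 \<equiv> avoid_frac Bootstrap n m 2"
  shows "0 < q \<and> q2 \<le> q \<and> q2 \<le> q\<^sup>2 \<and> (real n - 1) * (q - q2) \<le> real n * q * (1 - q)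
           \<and> p_nm Bootstrap n m = 1 - q"
proof -
  define a b where "a = 1 - 1 / real n" and "b = 1 - 2 / real n"
  have "real n \<ge> 2" using assms(1) by simp
  have "q = a ^ m" "q2 = b ^ m"
    using assms(1) by (simp_all add: q_def q2_def avoid_frac_Bootstrap a_def b_def)
  moreover have "0 < a" "0 \<le> b" "b \<le> a" "b \<le> a\<^sup>2"
    using \<open>real n \<ge> 2\<close> by (auto simp: a_def b_def power2_eq_square field_simps)
  moreover have "(a ^ m)\<^sup>2 = (a\<^sup>2) ^ m" by (metis power_mult mult.commute)
  moreover obtain k where "m = Suc k" using assms(2) by (cases m) auto
  moreover have "p_nm Bootstrap n m = 1 - a ^ m" by (simp add: p_nm_def a_def)
  ultimately show ?thesis
    using bootstrap_avoid_ineq[OF \<open>real n \<ge> 2\<close>, of k] power_mono[of b a m] power_mono[of b "a\<^sup>2" m]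
    by (simp only: a_def b_def) auto
qed

lemma avoid_frac_bounds_Subbagging:
  assumes "2 \<le> n" "m < n"
  defines "q \<equiv> avoid_frac Subbagging n m 1" and "q2 \<equiv> avoid_frac Subbagging n m 2"
  shows "0 < q \<and> q2 \<le> q \<and> q2 \<le> q\<^sup>2 \<and> (real n - 1) * (q - q2) \<le> real n * q * (1 - q)
           \<and> p_nm Subbagging n m = 1 - q"
proof -
  define t where "t = (real n - 1 - real m) / (real n - 1)"
  have q: "q = (real n - real m) / real n" and q2: "q2 = q * t"
    unfolding q_def q2_def t_def using assms(2)
    by (rule avoid_frac_Subbagging_1, simp add: avoid_frac_Subbagging_2[OF _ assms(1)])
  have "real m \<le> real n - 1" "real n \<ge> 2" using assms(1,2) by auto
  then have "0 < q" "0 \<le> t" "t \<le> 1" "t \<le> q" "(real n - 1) * (1 - t) = real m" "1 - q = real m / real n"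
    by (auto simp: q t_def field_simps)
  moreover have "(real n - 1) * (q - q2) = real n * q * (1 - q)"
  proof -
    have "(real n - 1) * (q - q2) = q * ((real n - 1) * (1 - t))" by (simp add: q2 algebra_simps)
    also have "\<dots> = real n * q * (1 - q)"
      using \<open>(real n - 1) * (1 - t) = real m\<close> \<open>1 - q = real m / real n\<close> \<open>real n \<ge> 2\<close> by simp
    finally show ?thesis .
  qed
  moreover have "p_nm Subbagging n m = real m / real n" by (simp add: p_nm_def)
  ultimately show ?thesis by (simp add: q2 mult_left_le mult_left_mono power2_eq_square)
qed

lemma avoid_frac_bounds:
  assumes "2 \<le> n" "1 \<le> m" "s = Subbagging \<longrightarrow> m \<le> n - 1"
  defines "q \<equiv> avoid_frac s n m 1" and "q2 \<equiv> avoid_frac s n m 2"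
  shows "0 < q" "q2 \<le> q" "q2 \<le> q\<^sup>2"
    and "(real n - 1) * (q - q2) \<le> real n * q * (1 - q)"
    and "p_nm s n m = 1 - q"
proof -
  have "0 < q \<and> q2 \<le> q \<and> q2 \<le> q\<^sup>2 \<and> (real n - 1) * (q - q2) \<le> real n * q * (1 - q)
        \<and> p_nm s n m = 1 - q"
    using assms avoid_frac_bounds_Bootstrap avoid_frac_bounds_Subbagging
    by (cases s) (simp_all add: Suc_le_eq)
  then show "0 < q" "q2 \<le> q" "q2 \<le> q\<^sup>2" "(real n - 1) * (q - q2) \<le> real n * q * (1 - q)"
    "p_nm s n m = 1 - q" by auto
qed

lemma leave_one_out_factor_le:
  assumes "2 \<le> n" "1 \<le> m" "s = Subbagging \<longrightarrow> m \<le> n - 1"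
  shows "(avoid_frac s n m 1 - avoid_frac s n m 2) / (avoid_frac s n m 1)\<^sup>2
           \<le> real n / (real n - 1) * (p_nm s n m / (1 - p_nm s n m))"
proof -
  define q q2 where "q = avoid_frac s n m 1" and "q2 = avoid_frac s n m 2"
  note bounds = avoid_frac_bounds[OF assms, folded q_def q2_def]
  have "real n - 1 > 0" using assms(1) by simp
  then have "(q - q2) / q\<^sup>2 = (real n - 1) * (q - q2) / ((real n - 1) * q\<^sup>2)" by simp
  also have "\<dots> \<le> real n * q * (1 - q) / ((real n - 1) * q\<^sup>2)"
    using bounds(4) \<open>real n - 1 > 0\<close> by (intro divide_right_mono) auto
  also have "\<dots> = real n / (real n - 1) * ((1 - q) / (1 - (1 - q)))"
    using bounds(1) \<open>real n - 1 > 0\<close> by (simp add: power2_eq_square field_simps)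
  finally show ?thesis by (simp add: bounds(5) q_def q2_def)
qed

section \<open>Leave-one-out stability of bagging\<close>

lemma nth_remove_nth:
  "k < length D - 1 \<Longrightarrow> remove_nth i D ! k = D ! (if k < i then k else Suc k)"
  by (auto simp: remove_nth_def nth_append min_def)

lemma bagged_eq_set_mean:
  "bagged s m A D x = set_mean (index_seqs s (length D) m) (\<lambda>r. A (map ((!) D) r) x)"
  by (simp add: bagged_def set_mean_def)

lemma bagged_remove_nth:
  assumes "i < length D"
  shows "bagged s m A (remove_nth i D) x
           = set_mean {r \<in> index_seqs s (length D) m. i \<notin> set r} (\<lambda>r. A (map ((!) D) r) x)"
proof -
  define skip where "skip k = (if k < i then k else Suc k)" for k
  have "inj skip" by (rule injI) (auto simp: skip_def split: if_splits)
  moreover have "skip ` {..<length D - 1} = {..<length D} - {i}"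
  proof (intro equalityI subsetI)
    fix j assume "j \<in> {..<length D} - {i}"
    then have "j = skip (if j < i then j else j - 1)" "(if j < i then j else j - 1) < length D - 1"
      using assms by (auto simp: skip_def)
    then show "j \<in> skip ` {..<length D - 1}" by blast
  qed (use assms in \<open>auto simp: skip_def\<close>)
  ultimately have "bij_betw (map skip) (index_seqs s (length D - 1) m)
      {r \<in> index_seqs s (length D) m. i \<notin> set r}"
    using bij_betw_map_bag_seqs[of skip "{..<length D - 1}" s m]
    by (simp add: index_seqs_eq_bag_seqs bag_seqs_avoiding inj_on_subset)
  then have "set_mean {r \<in> index_seqs s (length D) m. i \<notin> set r} (\<lambda>r. A (map ((!) D) r) x)
      = set_mean (index_seqs s (length D - 1) m) (\<lambda>r. A (map ((!) D) (map skip r)) x)"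
    by (rule set_mean_bij_betw)
  also have "\<dots> = set_mean (index_seqs s (length D - 1) m) (\<lambda>r. A (map ((!) (remove_nth i D)) r) x)"
  proof -
    have "map ((!) D) (map skip r) = map ((!) (remove_nth i D)) r"
      if "r \<in> index_seqs s (length D - 1) m" for r
      using that by (auto simp: index_seqs_def skip_def nth_remove_nth)
    then show ?thesis
      unfolding set_mean_def
      by (intro arg_cong[where f = "scaleR _"] sum.cong refl arg_cong[where f = "\<lambda>l. A l x"])
  qed
  finally show ?thesis
    using assms by (simp add: bagged_eq_set_mean remove_nth_def)
qed

lemma bagged_leave_one_out_sq_sum_le:
  fixes A :: "('x,'l::finite) algorithm"
  assumes "length D = n" "2 \<le> n" "1 \<le> m" "s = Subbagging \<longrightarrow> m \<le> n - 1"
    and "\<And>D. A D x \<in> prob_simplex"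
  shows "(\<Sum>i<n. (dist (bagged s m A (remove_nth i D) x) (bagged s m A D x))\<^sup>2)
           \<le> real n / (real n - 1) * (p_nm s n m / (1 - p_nm s n m)) * (1 - 1 / real CARD('l))"
proof -
  define S where "S = index_seqs s n m"
  define T where "T i = {r \<in> S. i \<notin> set r}" for i
  define f where "f = (\<lambda>r. A (map ((!) D) r) x)"
  define q q2 where "q = avoid_frac s n m 1" and "q2 = avoid_frac s n m 2"
  note bounds = avoid_frac_bounds[OF assms(2-4), folded q_def q2_def]
  have "finite S" by (simp add: S_def index_seqs_eq_bag_seqs finite_bag_seqs)
  have "0 < num_bag_seqs s n m"
    using bounds(1) by (simp add: q_def avoid_frac_def zero_less_divide_iff)
  then have "S \<noteq> {}" using card_index_seqs[of s n m] by (auto simp: S_def)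
  have "(\<Sum>i<n. (dist (bagged s m A (remove_nth i D) x) (bagged s m A D x))\<^sup>2)
      = (\<Sum>i\<in>{..<n}. (norm (set_mean (T i) f - set_mean S f))\<^sup>2)"
    using assms(1)
    by (intro sum.cong refl)
      (simp add: bagged_remove_nth bagged_eq_set_mean[of s m A D x] dist_norm T_def S_def f_def)
  also have "\<dots> \<le> (q - q2) / q\<^sup>2 * ((1 / real (card S)) * (\<Sum>r\<in>S. (norm (f r - set_mean S f))\<^sup>2))"
  proof (rule sum_sq_dist_subset_means_le)
    show "real (card (T i)) = q * real (card S)" if "i \<in> {..<n}" for i
      using that \<open>0 < num_bag_seqs s n m\<close>
      by (simp add: T_def S_def q_def avoid_frac_def card_index_seqs card_index_seqs_avoiding)
    show "real (card (T i \<inter> T j)) = q2 * real (card S)" if "i \<in> {..<n}" "j \<in> {..<n}" "i \<noteq> j" for i j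
    proof -
      have "T i \<inter> T j = {r \<in> S. i \<notin> set r \<and> j \<notin> set r}" by (auto simp: T_def)
      then show ?thesis
        using that \<open>0 < num_bag_seqs s n m\<close>
        by (simp add: S_def q2_def avoid_frac_def card_index_seqs card_index_seqs_avoiding2)
    qed
  qed (use \<open>finite S\<close> \<open>S \<noteq> {}\<close> bounds(1-3) in \<open>auto simp: T_def\<close>)
  also have "\<dots> \<le> (q - q2) / q\<^sup>2 * (1 - 1 / real CARD('l))"
    using \<open>finite S\<close> \<open>S \<noteq> {}\<close> assms(5) bounds(2)
    by (intro mult_left_mono prob_simplex_variance_le) (auto simp: f_def)
  also have "\<dots> \<le> real n / (real n - 1) * (p_nm s n m / (1 - p_nm s n m)) * (1 - 1 / real CARD('l))"
    using leave_one_out_factor_le[OF assms(2-4)] by (intro mult_right_mono) (simp_all add: q_def q2_def)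
  finally show ?thesis .
qed

theorem theorem1:
  fixes A :: "('x,'l::finite) algorithm"
    and s :: bag_scheme and n m :: nat and \<epsilon> :: real
  assumes "n \<ge> 2" and "m \<ge> 1" and "s = Subbagging \<longrightarrow> m \<le> n - 1"
    and "\<epsilon> > 0"
    and "\<And>D x. A D x \<in> prob_simplex"
  shows "selection_stable (\<lambda>D x. inflated_argmax \<epsilon> (bagged s m A D x))
           (\<epsilon> powr (-2) * ((1 - 1 / real CARD('l)) / (real n - 1))
              * (p_nm s n m / (1 - p_nm s n m))) n"
  unfolding selection_stable_def
proof (intro allI impI)
  fix D :: "('x,'l) dataset" and x :: 'x
  assume "length D = n"
  let ?C = "\<lambda>D. inflated_argmax \<epsilon> (bagged s m A D x)"
  let ?B = "real n / (real n - 1) * (p_nm s n m / (1 - p_nm s n m)) * (1 - 1 / real CARD('l))"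
  have "(\<Sum>i<n. if ?C D \<inter> ?C (remove_nth i D) = {} then 1 else 0)
      \<le> (\<Sum>i<n. (dist (bagged s m A (remove_nth i D) x) (bagged s m A D x))\<^sup>2) / \<epsilon>\<^sup>2"
    unfolding sum_divide_distrib using assms(4) by (intro sum_mono disjoint_inflated_argmax_indicator_le)
  also have "\<dots> \<le> ?B / \<epsilon>\<^sup>2"
    using bagged_leave_one_out_sq_sum_le[OF \<open>length D = n\<close> assms(1-3) assms(5)]
    by (rule divide_right_mono) simp
  finally have "1 / real n * (\<Sum>i<n. if ?C D \<inter> ?C (remove_nth i D) = {} then 1 else 0)
      \<le> 1 / real n * (?B / \<epsilon>\<^sup>2)"
    by (rule mult_left_mono) simp
  also have "1 / real n * (?B / \<epsilon>\<^sup>2)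
      = \<epsilon> powr (-2) * ((1 - 1 / real CARD('l)) / (real n - 1)) * (p_nm s n m / (1 - p_nm s n m))"
    using assms(1,4) by (simp add: powr_minus powr_numeral divide_inverse)
  finally show "1 / real n * (\<Sum>i<n. if ?C D \<inter> ?C (remove_nth i D) = {} then 1 else 0)
      \<le> \<epsilon> powr (-2) * ((1 - 1 / real CARD('l)) / (real n - 1)) * (p_nm s n m / (1 - p_nm s n m))" .
qed

end
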